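(* Let $E\in M_n(\mathbb{FT})$ be an idempotent of rank $n$, and regard $C(E)$ as a subset of $\mathbb{R}^n$ with the usual topology. Then for every $x\in\mathbb{R}^n\setminus C(E)$, the point $E\otimes x$ lies on the (topological) boundary of $C(E)$.
   Context: $\mathbb{FT}$ is $\mathbb{R}$ with $a\oplus b=\max(a,b)$, $a\otimes b=a+b$; $M_n(\mathbb{FT})$ is the semigroup of real $n\times n$ matrices acting on $\mathbb{R}^n$ by $(E\otimes x)_i=\max_k(E_{i,k}+x_k)$, and multiplied analogously. $C(E)$ is the set of finite componentwise maxima of columns of $E$ shifted by real constants; the rank of an idempotent $E$ is the minimal cardinality of a generating set of $C(E)$. *)

theory Defs
  imports "HOL-Analysis.Analysis"
begin

text \<open>Max-plus (full tropical) matrices of size n x n, with n given by the finite index type 'n.\<close>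

definition trop_mult :: "real^'n::finite^'n \<Rightarrow> real^'n^'n \<Rightarrow> real^'n^'n" where
  "trop_mult E F = (\<chi> i j. Max ((\<lambda>k. E$i$k + F$k$j) ` UNIV))"

definition trop_act :: "real^'n::finite^'n \<Rightarrow> real^'n \<Rightarrow> real^'n" where
  "trop_act E x = (\<chi> i. Max ((\<lambda>k. E$i$k + x$k) ` UNIV))"

definition trop_idempotent :: "real^'n::finite^'n \<Rightarrow> bool" where
  "trop_idempotent E \<longleftrightarrow> trop_mult E E = E"

definition trop_span :: "(real^'n::finite) set \<Rightarrow> (real^'n) set" where
  "trop_span G = {v. \<exists>F c. finite F \<and> F \<noteq> {} \<and> F \<subseteq> G \<and>
                      v = (\<chi> i. Max ((\<lambda>g. c g + g$i) ` F))}"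

definition trop_column :: "real^'n::finite^'n \<Rightarrow> 'n \<Rightarrow> real^'n" where
  "trop_column E j = (\<chi> i. E$i$j)"

definition trop_colspace :: "real^'n::finite^'n \<Rightarrow> (real^'n) set" where
  "trop_colspace E = trop_span (range (trop_column E))"

definition trop_rank :: "real^'n::finite^'n \<Rightarrow> nat" where
  "trop_rank E = (LEAST k. \<exists>G. finite G \<and> card G = k \<and> trop_span G = trop_colspace E)"

end

theory Submission
  imports Defs
begin

text \<open>An idempotent E fixes C(E), so by monotonicity E \<otimes> x lies below every point of C(E)
  above x. Full rank forces a nonnegative diagonal, because a column j with negative diagonal
  entry is a max-plus combination of the other columns; hence x \<le> E \<otimes> x, and x \<noteq> E \<otimes> x
  as x \<notin> C(E). Lowering a coordinate where they differ yields points arbitrarily close to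
  E \<otimes> x that are still above x but not above E \<otimes> x, hence outside C(E).\<close>

lemma trop_act_nth [simp]: "trop_act E x $ i = Max ((\<lambda>k. E$i$k + x$k) ` UNIV)"
  by (simp add: trop_act_def)

lemma trop_act_ge: "E$i$k + x$k \<le> trop_act E x $ i"
  by simp

lemma trop_act_attained: "\<exists>k. trop_act E x $ i = E$i$k + x$k"
proof -
  have "Max ((\<lambda>k. E$i$k + x$k) ` UNIV) \<in> (\<lambda>k. E$i$k + x$k) ` UNIV"
    by (rule Max_in) auto
  then show ?thesis unfolding trop_act_nth by blast
qed

lemma trop_act_mono:
  assumes "x \<le> z"
  shows "trop_act E x \<le> trop_act E z"
  unfolding less_eq_vec_def
proof
  fix i
  have "E$i$k + x$k \<le> trop_act E z $ i" for k
  proof -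
    have "E$i$k + x$k \<le> E$i$k + z$k" using assms by (simp add: less_eq_vec_def)
    also have "\<dots> \<le> trop_act E z $ i" by (rule trop_act_ge)
    finally show ?thesis .
  qed
  then show "trop_act E x $ i \<le> trop_act E z $ i" by (simp add: Max_le_iff)
qed

lemma trop_idempotent_entry:
  assumes "trop_idempotent E"
  shows "E$i$j = trop_act E (trop_column E j) $ i"
proof -
  have "trop_mult E E $ i $ j = E $ i $ j" using assms by (simp add: trop_idempotent_def)
  then show ?thesis by (simp add: trop_mult_def trop_column_def)
qed

lemma trop_idempotent_path_le:
  assumes "trop_idempotent E"
  shows "E$i$k + E$k$j \<le> E$i$j"
  using trop_act_ge[of E i k "trop_column E j"]
  by (simp add: trop_idempotent_entry[OF assms, of i j] trop_column_def)

lemma trop_idempotent_path_attained: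
  assumes "trop_idempotent E"
  obtains k where "E$i$j = E$i$k + E$k$j"
  using trop_act_attained[of E "trop_column E j" i]
  by (auto simp: trop_idempotent_entry[OF assms, of i j] trop_column_def)

lemma trop_comb_mem_span:
  fixes f :: "'k \<Rightarrow> real^'n::finite"
  assumes "finite K" "K \<noteq> {}"
  shows "(\<chi> i. Max ((\<lambda>k. a k + f k $ i) ` K)) \<in> trop_span (f ` K)"
proof -
  text \<open>Indices with the same vector are merged by keeping the largest coefficient.\<close>
  define c where "c g = Max (a ` {k\<in>K. f k = g})" for g
  have c_ge: "a k \<le> c (f k)" if "k \<in> K" for k
    unfolding c_def using that assms(1) by (intro Max_ge) auto
  have c_attained: "\<exists>k\<in>K. f k = g \<and> c g = a k" if "g \<in> f ` K" for g
  proof -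
    have "c g \<in> a ` {k\<in>K. f k = g}"
      unfolding c_def using that assms(1) by (intro Max_in) auto
    then show ?thesis by auto
  qed
  have "Max ((\<lambda>k. a k + f k $ i) ` K) = Max ((\<lambda>g. c g + g$i) ` f ` K)" for i
  proof (rule order.antisym)
    show "Max ((\<lambda>k. a k + f k $ i) ` K) \<le> Max ((\<lambda>g. c g + g$i) ` f ` K)"
    proof (subst Max_le_iff; (intro ballI)?)
      fix r assume "r \<in> (\<lambda>k. a k + f k $ i) ` K"
      then obtain k where k: "k \<in> K" "r = a k + f k $ i" by blast
      then have "r \<le> c (f k) + f k $ i" using c_ge by simp
      also have "\<dots> \<le> Max ((\<lambda>g. c g + g$i) ` f ` K)" using k(1) assms(1) by simp
      finally show "r \<le> Max ((\<lambda>g. c g + g$i) ` f ` K)" .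
    qed (use assms in auto)
    show "Max ((\<lambda>g. c g + g$i) ` f ` K) \<le> Max ((\<lambda>k. a k + f k $ i) ` K)"
    proof (subst Max_le_iff; (intro ballI)?)
      fix r assume "r \<in> (\<lambda>g. c g + g$i) ` f ` K"
      then obtain k where "k \<in> K" "r = a k + f k $ i" using c_attained by force
      then show "r \<le> Max ((\<lambda>k. a k + f k $ i) ` K)" using assms(1) by simp
    qed (use assms in auto)
  qed
  then show ?thesis
    unfolding trop_span_def using assms by (intro CollectI exI[of _ "f ` K"] exI[of _ c]) auto
qed

lemma trop_span_mono:
  assumes "G \<subseteq> H"
  shows "trop_span G \<subseteq> trop_span H"
proof
  fix v assume "v \<in> trop_span G"
  then obtain F c where "finite F" "F \<noteq> {}" "F \<subseteq> G" "v = (\<chi> i. Max ((\<lambda>g. c g + g$i) ` F))"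
    unfolding trop_span_def by blast
  then show "v \<in> trop_span H"
    unfolding trop_span_def using assms by (intro CollectI exI[of _ F] exI[of _ c]) auto
qed

lemma trop_act_in_colspace: "trop_act E x \<in> trop_colspace E"
proof -
  have "(\<chi> i. Max ((\<lambda>k. x$k + trop_column E k $ i) ` UNIV)) \<in> trop_colspace E"
    unfolding trop_colspace_def by (rule trop_comb_mem_span) auto
  then show ?thesis
    by (simp add: trop_act_def trop_column_def add.commute)
qed

lemma trop_act_fixes_colspace:
  assumes idem: "trop_idempotent E" and v: "v \<in> trop_colspace E"
  shows "trop_act E v = v"
proof -
  obtain F c where F: "finite F" "F \<noteq> {}" "F \<subseteq> range (trop_column E)"
    and "v = (\<chi> i. Max ((\<lambda>g. c g + g$i) ` F))"
    using v unfolding trop_colspace_def trop_span_def by blast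
  then have v_eq: "v$i = Max ((\<lambda>g. c g + g$i) ` F)" for i by simp
  have v_ge: "c (trop_column E j) + E$k$j \<le> v$k" if "trop_column E j \<in> F" for j k
  proof -
    have "c (trop_column E j) + trop_column E j $ k \<le> v$k"
      unfolding v_eq using that F(1) by (intro Max_ge) auto
    then show ?thesis by (simp add: trop_column_def)
  qed
  have v_attained: "\<exists>j. trop_column E j \<in> F \<and> v$k = c (trop_column E j) + E$k$j" for k
  proof -
    have "Max ((\<lambda>g. c g + g$k) ` F) \<in> (\<lambda>g. c g + g$k) ` F" using F by (intro Max_in) auto
    then obtain g where g: "g \<in> F" "v$k = c g + g$k" by (auto simp: v_eq)
    moreover obtain j where "g = trop_column E j" using g(1) F(3) by blast
    ultimately show ?thesis by (auto simp: trop_column_def)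
  qed
  have "trop_act E v $ i = v $ i" for i
  proof (rule order.antisym)
    have "E$i$k + v$k \<le> v$i" for k
    proof -
      obtain j where j: "trop_column E j \<in> F" "v$k = c (trop_column E j) + E$k$j"
        using v_attained by blast
      have "E$i$k + v$k \<le> c (trop_column E j) + E$i$j"
        using j(2) trop_idempotent_path_le[OF idem, of i k j] by simp
      also have "\<dots> \<le> v$i" using v_ge[OF j(1)] .
      finally show ?thesis .
    qed
    then show "trop_act E v $ i \<le> v$i" by simp
    obtain j where j: "trop_column E j \<in> F" "v$i = c (trop_column E j) + E$i$j"
      using v_attained by blast
    obtain k where "E$i$j = E$i$k + E$k$j" using trop_idempotent_path_attained[OF idem] .
    then have "v$i \<le> E$i$k + v$k" using j v_ge[OF j(1), of k] by simp
    also have "\<dots> \<le> trop_act E v $ i" by (rule trop_act_ge)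
    finally show "v$i \<le> trop_act E v $ i" .
  qed
  then show ?thesis by (simp add: vec_eq_iff)
qed

lemma trop_act_le_colspace:
  assumes "trop_idempotent E" "z \<in> trop_colspace E" "x \<le> z"
  shows "trop_act E x \<le> z"
  using trop_act_mono[OF assms(3), of E] trop_act_fixes_colspace[OF assms(1,2)] by simp

lemma trop_fixed_point_drop_index:
  assumes idem: "trop_idempotent E" and neg: "E$j$j < 0" and fixed: "trop_act E v = v"
  shows "v$i = Max ((\<lambda>k. v$k + E$i$k) ` (UNIV - {j}))"
proof -
  have v_attained: "\<exists>k. v$i = E$i$k + v$k" for i
    using trop_act_attained[of E v i] unfolding fixed .
  have v_ge: "E$i$k + v$k \<le> v$i" for i k
    using trop_act_ge[of E i k v] unfolding fixed .
  obtain k where k: "v$j = E$j$k + v$k" using v_attained by blast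
  then have "k \<noteq> j" using neg by auto
  obtain l where l: "l \<noteq> j" "v$i = E$i$l + v$l"
  proof -
    obtain l where l: "v$i = E$i$l + v$l" using v_attained by blast
    show thesis
    proof (cases "l = j")
      case True
      text \<open>A path through j can be shortcut, since the loop at j has negative weight.\<close>
      have "v$i \<le> E$i$k + v$k"
        using l k True trop_idempotent_path_le[OF idem, of i j k] by simp
      then show thesis using that \<open>k \<noteq> j\<close> v_ge[of i k] by simp
    qed (use l that in blast)
  qed
  show ?thesis
  proof (rule antisym)
    have "v$l + E$i$l \<le> Max ((\<lambda>k. v$k + E$i$k) ` (UNIV - {j}))"
      using l(1) by (intro Max_ge) auto
    then show "v$i \<le> Max ((\<lambda>k. v$k + E$i$k) ` (UNIV - {j}))" using l(2) by simp
    show "Max ((\<lambda>k. v$k + E$i$k) ` (UNIV - {j})) \<le> v$i"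
      using l(1) v_ge[of i] by (subst Max_le_iff) (auto simp: add.commute)
  qed
qed

lemma trop_colspace_drop_column:
  assumes "trop_idempotent E" "E$j$j < 0"
  shows "trop_colspace E = trop_span (trop_column E ` (UNIV - {j}))"
proof
  show "trop_span (trop_column E ` (UNIV - {j})) \<subseteq> trop_colspace E"
    unfolding trop_colspace_def by (intro trop_span_mono) auto
  show "trop_colspace E \<subseteq> trop_span (trop_column E ` (UNIV - {j}))"
  proof
    fix v assume v: "v \<in> trop_colspace E"
    obtain k where "E$j$j = E$j$k + E$k$j" using trop_idempotent_path_attained[OF assms(1)] .
    with assms(2) have "k \<noteq> j" by auto
    then have "UNIV - {j} \<noteq> {}" by auto
    then have "(\<chi> i. Max ((\<lambda>k. v$k + trop_column E k $ i) ` (UNIV - {j})))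
        \<in> trop_span (trop_column E ` (UNIV - {j}))"
      by (intro trop_comb_mem_span) auto
    moreover have "(\<chi> i. Max ((\<lambda>k. v$k + trop_column E k $ i) ` (UNIV - {j}))) = v"
      using trop_fixed_point_drop_index[OF assms trop_act_fixes_colspace[OF assms(1) v], symmetric]
      by (simp add: vec_eq_iff trop_column_def)
    ultimately show "v \<in> trop_span (trop_column E ` (UNIV - {j}))" by simp
  qed
qed

lemma trop_rank_le_card:
  assumes "finite G" "trop_span G = trop_colspace E"
  shows "trop_rank E \<le> card G"
  unfolding trop_rank_def using assms by (intro Least_le) blast

lemma trop_full_rank_idempotent_diag_nonneg:
  fixes E :: "real^'n::finite^'n"
  assumes "trop_idempotent E" "trop_rank E = CARD('n)"
  shows "0 \<le> E$j$j"
proof (rule ccontr)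
  assume "\<not> 0 \<le> E$j$j"
  then have "trop_span (trop_column E ` (UNIV - {j})) = trop_colspace E"
    by (intro trop_colspace_drop_column[OF assms(1), symmetric]) simp
  then have "trop_rank E \<le> card (trop_column E ` (UNIV - {j}))"
    by (intro trop_rank_le_card) auto
  also have "\<dots> \<le> card (UNIV - {j})" by (rule card_image_le) simp
  also have "\<dots> < CARD('n)" by (simp add: card_Diff_singleton)
  finally show False using assms(2) by simp
qed

lemma le_trop_act_if_diag_nonneg:
  assumes "\<And>k. 0 \<le> E$k$k"
  shows "x \<le> trop_act E x"
  unfolding less_eq_vec_def
proof
  fix k
  show "x$k \<le> trop_act E x $ k"
    using assms[of k] trop_act_ge[of E k k x] by linarith
qed

lemma least_point_above_not_interior:
  fixes x y :: "real^'n::finite"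
  assumes "x \<le> y" "x \<noteq> y" and least: "\<And>z. z \<in> S \<Longrightarrow> x \<le> z \<Longrightarrow> y \<le> z"
  shows "y \<notin> interior S"
proof
  assume "y \<in> interior S"
  then obtain e where e: "e > 0" "ball y e \<subseteq> S" by (meson mem_interior)
  obtain i where "x$i \<noteq> y$i" using assms(2) by (auto simp: vec_eq_iff)
  moreover have "x$i \<le> y$i" using assms(1) by (simp add: less_eq_vec_def)
  ultimately have i: "x$i < y$i" by simp
  define d where "d = min (e/2) ((y$i - x$i)/2)"
  have d: "0 < d" "d < e" "d < y$i - x$i" using e i by (auto simp: d_def min_def)
  define z where "z = y - d *\<^sub>R axis i 1"
  have "dist y z = d" using d by (simp add: z_def dist_norm)
  then have "z \<in> S" using e d by auto
  moreover have "x \<le> z"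
    using assms(1) d by (auto simp: z_def axis_def less_eq_vec_def)
  ultimately have "y$i \<le> z$i" using least by (simp add: less_eq_vec_def)
  moreover have "z$i = y$i - d" by (simp add: z_def axis_def)
  ultimately show False using d by simp
qed

theorem lemma7p1:
  fixes E :: "real^'n::finite^'n" and x :: "real^'n"
  assumes "trop_idempotent E"
    and "trop_rank E = CARD('n)"
    and "x \<notin> trop_colspace E"
  shows "trop_act E x \<in> frontier (trop_colspace E)"
proof -
  have in_colspace: "trop_act E x \<in> trop_colspace E" by (rule trop_act_in_colspace)
  have "x \<le> trop_act E x"
    using trop_full_rank_idempotent_diag_nonneg[OF assms(1,2)] by (rule le_trop_act_if_diag_nonneg)
  moreover have "x \<noteq> trop_act E x" using in_colspace assms(3) by auto
  ultimately have "trop_act E x \<notin> interior (trop_colspace E)"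
    using trop_act_le_colspace[OF assms(1)] by (rule least_point_above_not_interior)
  then show ?thesis using in_colspace closure_subset unfolding frontier_def by blast
qed

end
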